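(* For infinitely many $n$ there exist positive integers $b_1,\dots,b_n$ (each at most $n-1$) such that $(b_1,\dots,b_n)$-BG has an equilibrium graph in the MAX version with diameter $\sqrt{\log n}$.
   Context: Bounded budget network creation game $(b_1,\dots,b_n)$-BG: $n$ players with integer budgets $0\le b_i\le n-1$. A strategy of player $i$ is a set $S_i\subseteq\{1,\dots,n\}\setminus\{i\}$ with $|S_i|=b_i$; a profile is realized by the directed graph $G$ on $u_1,\dots,u_n$ with an arc $\overrightarrow{u_iu_j}$ iff $j\in S_i$. $U(G)$ is the undirected multigraph obtained by ignoring directions; $\operatorname{dist}(u,v)$ is the distance in $U(G)$, defined as $n^2$ between different components. MAX cost: $c_{MAX}(u)=\max_v\operatorname{dist}(u,v)+(\kappa-1)n^2$, $\kappa$ the number of components of $U(G)$. An equilibrium graph in the MAX version is a realization in which no vertex can decrease its MAX cost by changing its own strategy while the others are fixed. The diameter is the maximum distance between two vertices. Logarithms are base 2. *)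

theory Defs
  imports Complex_Main
begin

text \<open>Players are 0, ..., n-1 (player i corresponds to vertex u_(i+1)).
  A strategy profile is S :: nat => nat set; player i buys arcs from i to every j in S i.\<close>

definition valid_strategy :: "nat \<Rightarrow> nat \<Rightarrow> nat \<Rightarrow> nat set \<Rightarrow> bool" where
  "valid_strategy n bi i T \<longleftrightarrow> T \<subseteq> {0..<n} - {i} \<and> card T = bi"

definition valid_profile :: "nat \<Rightarrow> (nat \<Rightarrow> nat) \<Rightarrow> (nat \<Rightarrow> nat set) \<Rightarrow> bool" where
  "valid_profile n b S \<longleftrightarrow> (\<forall>i<n. valid_strategy n (b i) i (S i))"

text \<open>Edge relation of the underlying undirected graph U(G) (multi-edges are irrelevant for distances).\<close>
definition und_edges :: "nat \<Rightarrow> (nat \<Rightarrow> nat set) \<Rightarrow> (nat \<times> nat) set" where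
  "und_edges n S = {(u, v). u < n \<and> v < n \<and> (v \<in> S u \<or> u \<in> S v)}"

definition gdist :: "nat \<Rightarrow> (nat \<Rightarrow> nat set) \<Rightarrow> nat \<Rightarrow> nat \<Rightarrow> nat" where
  "gdist n S u v =
     (if \<exists>k. (u, v) \<in> (und_edges n S) ^^ k
      then (LEAST k. (u, v) \<in> (und_edges n S) ^^ k)
      else n ^ 2)"

definition num_components :: "nat \<Rightarrow> (nat \<Rightarrow> nat set) \<Rightarrow> nat" where
  "num_components n S = card ({0..<n} // ((und_edges n S)\<^sup>*))"

definition cost_max :: "nat \<Rightarrow> (nat \<Rightarrow> nat set) \<Rightarrow> nat \<Rightarrow> nat" where
  "cost_max n S u = Max {gdist n S u v | v. v < n} + (num_components n S - 1) * n ^ 2"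

definition max_equilibrium :: "nat \<Rightarrow> (nat \<Rightarrow> nat) \<Rightarrow> (nat \<Rightarrow> nat set) \<Rightarrow> bool" where
  "max_equilibrium n b S \<longleftrightarrow> valid_profile n b S \<and>
     (\<forall>i<n. \<forall>T. valid_strategy n (b i) i T \<longrightarrow> cost_max n S i \<le> cost_max n (S(i := T)) i)"

definition diameter :: "nat \<Rightarrow> (nat \<Rightarrow> nat set) \<Rightarrow> nat" where
  "diameter n S = Max {gdist n S u v | u v. u < n \<and> v < n}"

end

theory Submission
  imports Defs "HOL-Library.FuncSet"
begin

text \<open>The witness is the Hamming graph on the words of length \<open>D\<close> over an alphabet of size
  \<open>q = 2^D\<close>, so \<open>n = 2^(D*D)\<close>, in which every vertex buys arcs to all its Hamming neighbours.
  Graph distance is Hamming distance, so every vertex has eccentricity \<open>D = sqrt (log n)\<close>.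
  A deviating vertex \<open>u\<close> buys at most \<open>D*q\<close> arcs, and a bought vertex agrees in two coordinates
  with at most \<open>D*D*(q-1)^(D-2)\<close> of the \<open>(q-1)^D\<close> antipodes of \<open>u\<close>. For \<open>D \<ge> 12\<close> some
  antipode \<open>v\<close> therefore agrees with every bought vertex in at most one coordinate. The potential
  that is \<open>D\<close> at \<open>u\<close> and the Hamming distance to \<open>v\<close> elsewhere grows by at most one along each
  edge of the new graph, so \<open>u\<close> is still at distance \<open>D\<close> from \<open>v\<close>.\<close>

definition hamming :: "nat \<Rightarrow> (nat \<Rightarrow> 'a) \<Rightarrow> (nat \<Rightarrow> 'a) \<Rightarrow> nat" where
  "hamming D f g = card {i \<in> {..<D}. f i \<noteq> g i}"

lemma hamming_le: "hamming D f g \<le> D"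
proof -
  have "hamming D f g \<le> card {..<D}" unfolding hamming_def by (rule card_mono) auto
  then show ?thesis by simp
qed

lemma hamming_commute: "hamming D f g = hamming D g f"
  unfolding hamming_def by (rule arg_cong[where f = card]) auto

lemma hamming_self [simp]: "hamming D f f = 0"
  unfolding hamming_def by simp

lemma hamming_eq_0_iff: "hamming D f g = 0 \<longleftrightarrow> (\<forall>i<D. f i = g i)"
  unfolding hamming_def by auto

lemma hamming_triangle: "hamming D f h \<le> hamming D f g + hamming D g h"
proof -
  have "hamming D f h \<le> card ({i \<in> {..<D}. f i \<noteq> g i} \<union> {i \<in> {..<D}. g i \<noteq> h i})"
    unfolding hamming_def by (intro card_mono) auto
  also have "\<dots> \<le> hamming D f g + hamming D g h"
    unfolding hamming_def by (rule card_Un_le)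
  finally show ?thesis .
qed

lemma card_agree_add_hamming: "card {i \<in> {..<D}. f i = g i} + hamming D f g = D"
proof -
  have "card {i \<in> {..<D}. f i = g i} + hamming D f g
      = card ({i \<in> {..<D}. f i = g i} \<union> {i \<in> {..<D}. f i \<noteq> g i})"
    unfolding hamming_def by (rule card_Un_disjoint[symmetric]) auto
  also have "{i \<in> {..<D}. f i = g i} \<union> {i \<in> {..<D}. f i \<noteq> g i} = {..<D}" by auto
  finally show ?thesis by simp
qed

lemma hamming_step:
  assumes f: "f \<in> PiE {..<D} A" and g: "g \<in> PiE {..<D} A" and fg: "hamming D f g = Suc k"
  shows "\<exists>c \<in> PiE {..<D} A. hamming D f c = 1 \<and> hamming D c g = k"
proof -
  have "{i \<in> {..<D}. f i \<noteq> g i} \<noteq> {}"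
    using fg unfolding hamming_def by (metis card.empty nat.distinct(1))
  then obtain i where i: "i < D" "f i \<noteq> g i" by auto
  define c where "c = f(i := g i)"
  have "c \<in> PiE (insert i {..<D}) A"
    unfolding c_def using f PiE_mem[OF g] i(1) by (intro PiE_fun_upd) auto
  then have "c \<in> PiE {..<D} A" using i(1) by (simp add: insert_absorb)
  moreover have "{j \<in> {..<D}. f j \<noteq> c j} = {i}" using i unfolding c_def by auto
  moreover have "{j \<in> {..<D}. c j \<noteq> g j} = {j \<in> {..<D}. f j \<noteq> g j} - {i}"
    unfolding c_def by auto
  moreover have "i \<in> {j \<in> {..<D}. f j \<noteq> g j}" using i by simp
  ultimately show ?thesis
    using fg unfolding hamming_def by (intro bexI[of _ c]) (simp_all add: card_Diff_singleton)
qed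

lemma hamming_eq_1_imp_fun_upd:
  assumes f: "f \<in> PiE {..<D} A" and g: "g \<in> PiE {..<D} A" and fg: "hamming D f g = 1"
  shows "\<exists>i<D. g = f(i := g i)"
proof -
  obtain i where i: "{j \<in> {..<D}. f j \<noteq> g j} = {i}"
    using fg unfolding hamming_def by (rule card_1_singletonE)
  have "g k = (f(i := g i)) k" for k
  proof (cases "k < D \<and> k \<noteq> i")
    case True
    then have "k \<notin> {j \<in> {..<D}. f j \<noteq> g j}" by (subst i) simp
    then show ?thesis using True by simp
  next
    case False
    then show ?thesis using PiE_arb[OF f, of k] PiE_arb[OF g, of k] by auto
  qed
  moreover have "i < D" using i by blast
  ultimately show ?thesis by blast
qed

lemma card_hamming_sphere_1_le:
  assumes f: "f \<in> PiE {..<D} (\<lambda>_. {..<q})"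
  shows "card {g \<in> PiE {..<D} (\<lambda>_. {..<q}). hamming D f g = 1} \<le> D * q"
proof -
  let ?upd = "\<lambda>(i, c). f(i := c)"
  have "{g \<in> PiE {..<D} (\<lambda>_. {..<q}). hamming D f g = 1} \<subseteq> ?upd ` ({..<D} \<times> {..<q})"
  proof
    fix g assume "g \<in> {g \<in> PiE {..<D} (\<lambda>_. {..<q}). hamming D f g = 1}"
    then have g: "g \<in> PiE {..<D} (\<lambda>_. {..<q})" and fg: "hamming D f g = 1" by auto
    obtain i where i: "i < D" "g = f(i := g i)" using hamming_eq_1_imp_fun_upd[OF f g fg] by blast
    have "(i, g i) \<in> {..<D} \<times> {..<q}" using i(1) PiE_mem[OF g, of i] by simp
    moreover have "g = ?upd (i, g i)" using i(2) by simp
    ultimately show "g \<in> ?upd ` ({..<D} \<times> {..<q})" by (rule rev_image_eqI)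
  qed
  then have "card {g \<in> PiE {..<D} (\<lambda>_. {..<q}). hamming D f g = 1} \<le> card (?upd ` ({..<D} \<times> {..<q}))"
    by (intro card_mono) auto
  also have "\<dots> \<le> card ({..<D} \<times> {..<q})" by (rule card_image_le) simp
  finally show ?thesis by (simp add: card_cartesian_product)
qed

lemma exists_point_far_from_all:
  fixes W :: "(nat \<Rightarrow> nat) set"
  assumes x: "x \<in> PiE {..<D} (\<lambda>_. {..<q})" and W: "finite W"
    and bound: "card W * (D * D * (q - 1) ^ (D - 2)) < (q - 1) ^ D"
  shows "\<exists>v \<in> PiE {..<D} (\<lambda>_. {..<q}). hamming D x v = D \<and> (\<forall>w\<in>W. D \<le> hamming D w v + 1)"
proof -
  define G where "G = PiE {..<D} (\<lambda>k. {..<q} - {x k})"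
  define pairs where "pairs = {(i, j) \<in> {..<D} \<times> {..<D}. i \<noteq> j}"
  define B where "B w p = {v \<in> G. v (fst p) = w (fst p) \<and> v (snd p) = w (snd p)}" for w :: "nat \<Rightarrow> nat" and p
  define Bad where "Bad = (\<Union>w\<in>W. \<Union>p\<in>pairs. B w p)"
  have card_avoid: "card ({..<q} - {x k}) = q - 1" if "k < D" for k
    using PiE_mem[OF x, of k] that by (simp add: card_Diff_singleton)
  have card_G: "card G = (q - 1) ^ D"
    unfolding G_def by (simp add: card_PiE card_avoid)
  have card_B: "card (B w p) \<le> (q - 1) ^ (D - 2)" if p: "p \<in> pairs" for w p
  proof -
    obtain i j where ij: "p = (i, j)" "i < D" "j < D" "i \<noteq> j" using p unfolding pairs_def by auto
    define C where "C k = (if k \<in> {i, j} then {w k} else {..<q} - {x k})" for k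
    have "B w p \<subseteq> PiE {..<D} C"
      unfolding B_def G_def C_def ij(1) by (auto simp: PiE_iff extensional_def)
    then have "card (B w p) \<le> card (PiE {..<D} C)"
      by (intro card_mono finite_PiE) (auto simp: C_def)
    also have "\<dots> = (\<Prod>k\<in>{..<D}. if k \<in> {i, j} then 1 else q - 1)"
      unfolding card_PiE[OF finite_lessThan] by (rule prod.cong) (auto simp: C_def card_avoid)
    also have "\<dots> = (q - 1) ^ card ({..<D} - {i, j})"
    proof -
      have "{..<D} \<inter> - {k. k \<in> {i, j}} = {..<D} - {i, j}" by blast
      then show ?thesis unfolding prod.If_cases[OF finite_lessThan] by simp
    qed
    also have "card ({..<D} - {i, j}) = D - 2"
      using ij by (simp add: card_Diff_subset)
    finally show ?thesis .
  qed
  have pairs_sub: "pairs \<subseteq> {..<D} \<times> {..<D}" unfolding pairs_def by auto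
  then have finite_pairs: "finite pairs" by (rule finite_subset) simp
  have "card pairs \<le> card ({..<D} \<times> {..<D})" using pairs_sub by (intro card_mono) auto
  then have card_pairs: "card pairs \<le> D * D" by (simp add: card_cartesian_product)
  have "card Bad \<le> (\<Sum>w\<in>W. \<Sum>p\<in>pairs. card (B w p))"
    unfolding Bad_def by (intro order.trans[OF card_UN_le[OF W]] sum_mono card_UN_le finite_pairs)
  also have "\<dots> \<le> (\<Sum>w\<in>W. \<Sum>p\<in>pairs. (q - 1) ^ (D - 2))"
    by (intro sum_mono card_B)
  also have "\<dots> \<le> card W * (D * D * (q - 1) ^ (D - 2))"
    using card_pairs by (simp add: mult_le_mono1)
  also have "\<dots> < card G" using bound card_G by simp
  finally have "card Bad < card G" .
  moreover have "finite Bad"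
  proof (rule finite_subset)
    show "Bad \<subseteq> G" unfolding Bad_def B_def by auto
    show "finite G" unfolding G_def by (rule finite_PiE) auto
  qed
  ultimately obtain v where vG: "v \<in> G" and vBad: "v \<notin> Bad"
    by (meson card_mono not_le subsetI)
  have v: "v \<in> PiE {..<D} (\<lambda>_. {..<q})" using vG unfolding G_def by (auto simp: PiE_iff)
  have "{i \<in> {..<D}. x i \<noteq> v i} = {..<D}" using vG unfolding G_def by (force simp: PiE_iff)
  then have xv: "hamming D x v = D" unfolding hamming_def by simp
  have "D \<le> hamming D w v + 1" if w: "w \<in> W" for w
  proof -
    have "i = j" if "i \<in> {k \<in> {..<D}. w k = v k}" "j \<in> {k \<in> {..<D}. w k = v k}" for i j
    proof (rule ccontr)
      assume "i \<noteq> j"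
      then have "v \<in> B w (i, j)" "(i, j) \<in> pairs" using that vG unfolding B_def pairs_def by auto
      then show False using vBad w unfolding Bad_def by blast
    qed
    then have "card {k \<in> {..<D}. w k = v k} \<le> 1" by (simp add: card_le_Suc0_iff_eq)
    then show ?thesis using card_agree_add_hamming[of D w v] by linarith
  qed
  with v xv show ?thesis by blast
qed

lemma relpow_potential_le:
  fixes P :: "'a \<Rightarrow> nat"
  assumes "\<And>x y. (x, y) \<in> R \<Longrightarrow> P x \<le> P y + 1"
  shows "(x, y) \<in> R ^^ k \<Longrightarrow> P x \<le> P y + k"
proof (induction k arbitrary: y)
  case 0
  then show ?case by simp
next
  case (Suc k)
  then obtain c where "(x, c) \<in> R ^^ k" "(c, y) \<in> R" by auto
  with Suc.IH assms show ?case by fastforce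
qed

lemma gdist_le_relpow: "(u, v) \<in> und_edges n S ^^ k \<Longrightarrow> gdist n S u v \<le> k"
  unfolding gdist_def by (auto intro: Least_le)

text \<open>The bound by \<open>n^2\<close> covers the case that \<open>v\<close> is unreachable from \<open>u\<close>, where \<open>gdist\<close> is \<open>n^2\<close>.\<close>

lemma gdist_ge_potential:
  fixes P :: "nat \<Rightarrow> nat"
  assumes edge: "\<And>x y. (x, y) \<in> und_edges n S \<Longrightarrow> P x \<le> P y + 1"
    and far: "P u \<le> P v + n ^ 2"
  shows "P u \<le> P v + gdist n S u v"
proof (cases "\<exists>k. (u, v) \<in> und_edges n S ^^ k")
  case True
  then have "(u, v) \<in> und_edges n S ^^ gdist n S u v"
    using LeastI_ex[OF True] unfolding gdist_def by simp
  then show ?thesis using relpow_potential_le[of "und_edges n S" P] edge by blast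
next
  case False
  then show ?thesis using far unfolding gdist_def by simp
qed

lemma two_mul_cube_le_exp: "12 \<le> D \<Longrightarrow> 2 * D ^ 3 \<le> (2::nat) ^ D"
proof (induction D rule: dec_induct)
  case base
  then show ?case by simp
next
  case (step D)
  have "4 * D \<le> D * D" using step.hyps(1) by simp
  then have "3 * D * D + 3 * D + 1 \<le> D * D * D"
    using mult_le_mono1[of "4 * D" "D * D" D] step.hyps(1) by linarith
  then have "Suc D ^ 3 \<le> 2 * D ^ 3" by (simp add: power3_eq_cube algebra_simps)
  then show ?case using step.IH by simp
qed

lemma exp_budget_bound:
  assumes D: "12 \<le> D"
  shows "D * 2 ^ D * (D * D * (2 ^ D - 1) ^ (D - 2)) < ((2::nat) ^ D - 1) ^ D"
proof -
  define P :: nat where "P = 2 ^ D - 1"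
  have "(2::nat) ^ 2 \<le> 2 ^ D" using D by (intro power_increasing) auto
  then have P3: "3 \<le> P" and Q: "2 ^ D = P + 1" unfolding P_def by auto
  have "2 * D ^ 3 * (P + 1) \<le> (P + 1) * (P + 1)"
    using two_mul_cube_le_exp[OF D] unfolding Q by (rule mult_le_mono1)
  moreover have "(P + 1) * (P + 1) < 2 * (P * P)"
  proof -
    have "3 * P \<le> P * P" using P3 by simp
    then have "2 * P + 1 < P * P" using P3 by linarith
    then show ?thesis by (simp add: algebra_simps)
  qed
  ultimately have "D * D * D * (P + 1) < P ^ 2" by (simp add: power2_eq_square power3_eq_cube)
  then have "D * D * D * (P + 1) * P ^ (D - 2) < P ^ 2 * P ^ (D - 2)" using P3 by simp
  also have "\<dots> = P ^ (2 + (D - 2))" by (rule power_add[symmetric])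
  also have "2 + (D - 2) = D" using D by simp
  finally show ?thesis unfolding Q by (simp add: P_def algebra_simps)
qed

locale hamming_game =
  fixes D q n :: nat and \<phi> :: "nat \<Rightarrow> nat \<Rightarrow> nat"
  assumes bij: "bij_betw \<phi> {0..<n} (PiE {..<D} (\<lambda>_. {..<q}))"
    and D_pos: "0 < D"
    and budget_bound: "D * q * (D * D * (q - 1) ^ (D - 2)) < (q - 1) ^ D"
begin

abbreviation hdist :: "nat \<Rightarrow> nat \<Rightarrow> nat" where
  "hdist a b \<equiv> hamming D (\<phi> a) (\<phi> b)"

definition profile :: "nat \<Rightarrow> nat set" where
  "profile a = {b \<in> {0..<n}. hdist a b = 1}"

lemma phi_PiE: "a < n \<Longrightarrow> \<phi> a \<in> PiE {..<D} (\<lambda>_. {..<q})"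
  using bij by (auto simp: bij_betw_def)

lemma phi_surj: "f \<in> PiE {..<D} (\<lambda>_. {..<q}) \<Longrightarrow> \<exists>a<n. \<phi> a = f"
  using bij unfolding bij_betw_def by (metis atLeastLessThan_iff imageE)

lemma eq_if_hdist_eq_0:
  assumes "a < n" "b < n" "hdist a b = 0"
  shows "a = b"
proof -
  have "\<phi> a = \<phi> b"
    using assms by (intro PiE_ext[OF phi_PiE phi_PiE]) (auto simp: hamming_eq_0_iff)
  then show ?thesis using bij assms(1,2) by (auto simp: bij_betw_def inj_on_def)
qed

lemma n_eq: "n = q ^ D"
  using bij_betw_same_card[OF bij] by (simp add: card_PiE)

lemma D_le_n_sq: "D \<le> n ^ 2"
proof -
  have "0 < (q - 1) ^ D" using budget_bound by linarith
  then have "2 \<le> q" using D_pos by (cases "q - 1") auto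
  have "D < 2 ^ D" by (rule less_exp)
  also have "\<dots> \<le> n" unfolding n_eq using \<open>2 \<le> q\<close> by (rule power_mono) simp
  also have "n \<le> n ^ 2" by (simp add: power2_eq_square)
  finally show ?thesis by simp
qed

lemma n_pos: "0 < n"
  unfolding n_eq using budget_bound by (cases q) auto

lemma far_vertex:
  assumes u: "u < n" and W: "W \<subseteq> {0..<n}" "card W \<le> D * q"
  shows "\<exists>v<n. hdist u v = D \<and> (\<forall>w\<in>W. D \<le> hdist w v + 1)"
proof -
  have finW: "finite W" using W(1) finite_subset by blast
  have "card (\<phi> ` W) * (D * D * (q - 1) ^ (D - 2)) \<le> D * q * (D * D * (q - 1) ^ (D - 2))"
    using card_image_le[OF finW, of \<phi>] W(2) by (intro mult_le_mono1) linarith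
  then obtain f where f: "f \<in> PiE {..<D} (\<lambda>_. {..<q})" "hamming D (\<phi> u) f = D"
    "\<forall>g\<in>\<phi> ` W. D \<le> hamming D g f + 1"
    using exists_point_far_from_all[OF phi_PiE[OF u] finite_imageI[OF finW]] budget_bound
    by (meson order.strict_trans1)
  obtain v where "v < n" "\<phi> v = f" using phi_surj[OF f(1)] by blast
  with f show ?thesis by auto
qed

lemma antipode: "u < n \<Longrightarrow> \<exists>v<n. hdist u v = D"
  using far_vertex[of u "{}"] by auto

lemma profile_subset: "profile a \<subseteq> {0..<n} - {a}"
  unfolding profile_def by auto

lemma finite_profile: "finite (profile a)"
  using finite_subset[OF profile_subset] by simp

lemma card_profile_pos:
  assumes a: "a < n"
  shows "0 < card (profile a)"
proof -
  obtain v where v: "v < n" "hdist a v = Suc (D - 1)" using antipode[OF a] D_pos by auto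
  obtain f where f: "f \<in> PiE {..<D} (\<lambda>_. {..<q})" "hamming D (\<phi> a) f = 1"
    using hamming_step[OF phi_PiE[OF a] phi_PiE[OF v(1)] v(2)] by blast
  obtain c where "c < n" "\<phi> c = f" using phi_surj[OF f(1)] by blast
  then have "c \<in> profile a" using f(2) unfolding profile_def by simp
  then show ?thesis using finite_profile[of a] card_gt_0_iff by blast
qed

lemma card_profile_le_D_mul_q:
  assumes a: "a < n"
  shows "card (profile a) \<le> D * q"
proof -
  let ?sphere = "{f \<in> PiE {..<D} (\<lambda>_. {..<q}). hamming D (\<phi> a) f = 1}"
  have "profile a \<subseteq> {0..<n}" unfolding profile_def by blast
  then have "inj_on \<phi> (profile a)" using bij_betw_imp_inj_on[OF bij] by (rule inj_on_subset[rotated])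
  then have "card (profile a) = card (\<phi> ` profile a)" by (simp add: card_image)
  also have "\<dots> \<le> card ?sphere"
  proof (rule card_mono)
    have "finite (PiE {..<D} (\<lambda>_. {..<q}))" by (simp add: finite_PiE)
    then show "finite ?sphere" by (rule finite_subset[rotated]) blast
    show "\<phi> ` profile a \<subseteq> ?sphere"
    proof
      fix f assume "f \<in> \<phi> ` profile a"
      then obtain b where "b \<in> profile a" "f = \<phi> b" by blast
      then show "f \<in> ?sphere" using phi_PiE by (simp add: profile_def)
    qed
  qed
  also have "\<dots> \<le> D * q" by (rule card_hamming_sphere_1_le[OF phi_PiE[OF a]])
  finally show ?thesis .
qed

lemma profile_budget: "a < n \<Longrightarrow> 0 < card (profile a) \<and> card (profile a) \<le> n - 1"
  using card_profile_pos card_mono[OF _ profile_subset[of a]] by simp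

lemma und_edges_profile: "und_edges n profile = {(a, b). a < n \<and> b < n \<and> hdist a b = 1}"
  unfolding und_edges_def profile_def by (auto simp: hamming_commute)

lemma relpow_hdist: "a < n \<Longrightarrow> b < n \<Longrightarrow> (a, b) \<in> und_edges n profile ^^ hdist a b"
proof (induction "hdist a b" arbitrary: a)
  case 0
  then show ?case using eq_if_hdist_eq_0 by fastforce
next
  case (Suc k)
  obtain f where f: "f \<in> PiE {..<D} (\<lambda>_. {..<q})" "hamming D (\<phi> a) f = 1" "hamming D f (\<phi> b) = k"
    using hamming_step[OF phi_PiE phi_PiE Suc.hyps(2)[symmetric]] Suc.prems by blast
  obtain c where c: "c < n" "\<phi> c = f" using phi_surj[OF f(1)] by blast
  have "(a, c) \<in> und_edges n profile" using c f Suc.prems by (simp add: und_edges_profile)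
  moreover have "(c, b) \<in> und_edges n profile ^^ k" using Suc.hyps(1)[of c] c f Suc.prems by simp
  ultimately show ?case using Suc.hyps(2) by (metis relpow_Suc_I2)
qed

lemma gdist_profile:
  assumes a: "a < n" and b: "b < n"
  shows "gdist n profile a b = hdist a b"
proof (rule antisym)
  show "gdist n profile a b \<le> hdist a b" by (rule gdist_le_relpow[OF relpow_hdist[OF a b]])
  have "hdist x b \<le> hdist y b + 1" if "(x, y) \<in> und_edges n profile" for x y
    using that hamming_triangle[of D "\<phi> x" "\<phi> b" "\<phi> y"] by (simp add: und_edges_profile)
  moreover have "hdist a b \<le> hdist b b + n ^ 2" using hamming_le D_le_n_sq by (metis le_add2 order.trans)
  ultimately show "hdist a b \<le> gdist n profile a b"
    using gdist_ge_potential[where P = "\<lambda>z. hdist z b"] by fastforce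
qed

lemma num_components_profile: "num_components n profile = 1"
proof -
  have "(und_edges n profile)\<^sup>* `` {a} = {0..<n}" if a: "a < n" for a
  proof
    show "(und_edges n profile)\<^sup>* `` {a} \<subseteq> {0..<n}"
      using a by (auto elim: rtranclE simp: und_edges_profile)
    show "{0..<n} \<subseteq> (und_edges n profile)\<^sup>* `` {a}"
      using relpow_hdist[OF a] relpow_imp_rtrancl by fastforce
  qed
  then have "{0..<n} // (und_edges n profile)\<^sup>* = {{0..<n}}"
    unfolding quotient_def using n_pos by auto
  then show ?thesis unfolding num_components_def by simp
qed

lemma Max_hdist: "a < n \<Longrightarrow> Max (hdist a ` {..<n}) = D"
  using antipode[of a] hamming_le by (intro Max_eqI) force+

lemma cost_max_profile: "a < n \<Longrightarrow> cost_max n profile a = D"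
proof -
  assume a: "a < n"
  have "{gdist n profile a v | v. v < n} = hdist a ` {..<n}"
    using gdist_profile[OF a] by force
  then show ?thesis unfolding cost_max_def num_components_profile using Max_hdist[OF a] by simp
qed

lemma diameter_profile: "diameter n profile = D"
proof -
  have "{gdist n profile u v | u v. u < n \<and> v < n} = (\<Union>u<n. hdist u ` {..<n})"
    using gdist_profile by force
  moreover have "Max (\<Union>u<n. hdist u ` {..<n}) = D"
    using antipode[of 0] hamming_le n_pos by (intro Max_eqI) force+
  ultimately show ?thesis unfolding diameter_def by simp
qed

lemma deviation_potential_step:
  assumes uv: "hdist u v = D" and far: "\<forall>w\<in>T. D \<le> hdist w v + 1"
    and edge: "(a, b) \<in> und_edges n (profile(u := T))"
  shows "(if a = u then D else hdist a v) \<le> (if b = u then D else hdist b v) + 1"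
proof -
  have ab: "b \<in> (profile(u := T)) a \<or> a \<in> (profile(u := T)) b"
    using edge unfolding und_edges_def by auto
  consider "a = u" "b = u" | "a = u" "b \<noteq> u" | "a \<noteq> u" "b = u" | "a \<noteq> u" "b \<noteq> u" by blast
  then show ?thesis
  proof cases
    case 1
    then show ?thesis by simp
  next
    case 2
    then have "b \<in> T \<or> hdist u b = 1" using ab by (auto simp: profile_def hamming_commute)
    moreover have "D \<le> hdist b v + 1" if "hdist u b = 1"
      using hamming_triangle[of D "\<phi> u" "\<phi> v" "\<phi> b"] uv that by simp
    ultimately have "D \<le> hdist b v + 1" using far by blast
    then show ?thesis using 2 by simp
  next
    case 3
    then show ?thesis using hamming_le[of D "\<phi> a" "\<phi> v"] by simp
  next
    case 4
    then have "hdist b a = 1" using ab by (auto simp: profile_def hamming_commute)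
    then show ?thesis using 4 hamming_triangle[of D "\<phi> a" "\<phi> v" "\<phi> b"] by (simp add: hamming_commute)
  qed
qed

lemma cost_max_deviation_ge:
  assumes u: "u < n" and T: "valid_strategy n (card (profile u)) u T"
  shows "D \<le> cost_max n (profile(u := T)) u"
proof -
  have "T \<subseteq> {0..<n}" "card T \<le> D * q"
    using T card_profile_le_D_mul_q[OF u] unfolding valid_strategy_def by auto
  then obtain v where v: "v < n" "hdist u v = D" "\<forall>w\<in>T. D \<le> hdist w v + 1"
    using far_vertex[OF u] by blast
  have "v \<noteq> u" using v(2) D_pos by auto
  let ?P = "\<lambda>z. if z = u then D else hdist z v"
  have "?P x \<le> ?P y + 1" if "(x, y) \<in> und_edges n (profile(u := T))" for x y
    using deviation_potential_step[OF v(2,3) that] .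
  moreover have "?P u \<le> ?P v + n ^ 2" using D_le_n_sq \<open>v \<noteq> u\<close> by simp
  ultimately have "?P u \<le> ?P v + gdist n (profile(u := T)) u v"
    by (rule gdist_ge_potential)
  then have "D \<le> gdist n (profile(u := T)) u v" using \<open>v \<noteq> u\<close> by simp
  also have "\<dots> \<le> Max {gdist n (profile(u := T)) u w | w. w < n}"
    using v(1) by (intro Max_ge) auto
  also have "\<dots> \<le> cost_max n (profile(u := T)) u"
    unfolding cost_max_def by simp
  finally show ?thesis .
qed

lemma max_equilibrium_profile: "max_equilibrium n (\<lambda>a. card (profile a)) profile"
  unfolding max_equilibrium_def valid_profile_def
proof (intro conjI allI impI)
  fix a assume a: "a < n"
  show "valid_strategy n (card (profile a)) a (profile a)"
    unfolding valid_strategy_def using profile_subset[of a] by blast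
  fix T assume "valid_strategy n (card (profile a)) a T"
  with a have "D \<le> cost_max n (profile(a := T)) a" by (rule cost_max_deviation_ge)
  then show "cost_max n profile a \<le> cost_max n (profile(a := T)) a"
    by (simp only: cost_max_profile[OF a])
qed

end

lemma ex_hamming_game_pow2:
  assumes D: "12 \<le> D"
  shows "\<exists>\<phi>. hamming_game D (2 ^ D) (2 ^ (D * D)) \<phi>"
proof -
  have "card {0..<(2::nat) ^ (D * D)} = card (PiE {..<D} (\<lambda>_. {..<(2::nat) ^ D}))"
    by (simp add: card_PiE power_mult)
  moreover have "finite (PiE {..<D} (\<lambda>_. {..<(2::nat) ^ D}))" by (simp add: finite_PiE)
  ultimately obtain \<phi> where "bij_betw \<phi> {0..<(2::nat) ^ (D * D)} (PiE {..<D} (\<lambda>_. {..<(2::nat) ^ D}))"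
    using finite_same_card_bij[OF finite_atLeastLessThan] by blast
  moreover have "0 < D" using D by simp
  ultimately have "hamming_game D (2 ^ D) (2 ^ (D * D)) \<phi>"
    using exp_budget_bound[OF D] by unfold_locales
  then show ?thesis by blast
qed

theorem mainTheorem8:
  shows "infinite {n :: nat. \<exists>(b :: nat \<Rightarrow> nat) (S :: nat \<Rightarrow> nat set).
            (\<forall>i<n. 0 < b i \<and> b i \<le> n - 1) \<and> max_equilibrium n b S \<and>
            real (diameter n S) = sqrt (log 2 (real n))}"
    (is "infinite ?good")
proof -
  have good: "2 ^ (D * D) \<in> ?good" if D: "12 \<le> D" for D
  proof -
    obtain \<phi> where "hamming_game D (2 ^ D) (2 ^ (D * D)) \<phi>" using ex_hamming_game_pow2[OF D] by blast
    then interpret hamming_game D "2 ^ D" "2 ^ (D * D)" \<phi> .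
    show ?thesis
      using profile_budget max_equilibrium_profile diameter_profile
      by (intro CollectI exI[of _ "\<lambda>a. card (profile a)"] exI[of _ profile] conjI)
        (simp_all add: log_nat_power)
  qed
  have "strict_mono (\<lambda>D::nat. (2::nat) ^ (D * D))"
    by (rule strict_monoI) (simp add: mult_strict_mono)
  then have "infinite ((\<lambda>D::nat. (2::nat) ^ (D * D)) ` {12..})"
    using finite_imageD[OF _ strict_mono_imp_inj_on] infinite_Ici by blast
  moreover have "(\<lambda>D. 2 ^ (D * D)) ` {12..} \<subseteq> ?good"
    by (intro image_subsetI good) simp
  ultimately show ?thesis using infinite_super by blast
qed

end
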